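(* Let $\mathcal{P}_1\subseteq\mathcal{P}_2\subseteq\mathbb{Z}_{\geq0}$ with $0\in\mathcal{P}_1$ and $\mathcal{P}_1-2\neq\emptyset$. Then $\tau_{\mathcal{P}_1}\geq\tau_{\mathcal{P}_2}$.
   Context: For $\mathcal{P}\subseteq\mathbb{Z}_{\ge0}$, $e_\mathcal{P}(z)=\sum_{n\in\mathcal{P}}z^n/n!$ and $\mathcal{P}-2=\{n-2:n\in\mathcal{P},n\ge2\}$. When $0\in\mathcal{P}$ and $\mathcal{P}-2\ne\emptyset$, $\tau_\mathcal{P}$ denotes the unique $\tau\in\mathbb{R}_{>0}$ with $e_\mathcal{P}(\tau)-\tau e_\mathcal{P}'(\tau)=0$. *)

theory Defs
  imports "HOL-Analysis.Analysis"
begin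

definition eP :: "nat set \<Rightarrow> real \<Rightarrow> real" where
  "eP P z = (\<Sum>n. (if n \<in> P then z ^ n / fact n else 0))"

definition minus2 :: "nat set \<Rightarrow> nat set" where
  "minus2 P = {n - 2 | n. n \<in> P \<and> 2 \<le> n}"

definition tauP :: "nat set \<Rightarrow> real" where
  "tauP P = (THE \<tau>. \<tau> > 0 \<and> eP P \<tau> - \<tau> * deriv (eP P) \<tau> = 0)"

end

theory Submission
  imports Defs
begin

text \<open>For \<open>0 \<in> P\<close> the tangent intercept \<open>e\<^sub>P(z) - z e\<^sub>P'(z)\<close> equals \<open>1 - h\<^sub>P(z)\<close>, where
  \<open>h\<^sub>P(z) = \<Sum>\<^bsub>n \<in> P, n \<ge> 2\<^esub> (n - 1) z\<^sup>n / n!\<close> has nonnegative coefficients, vanishes at 0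
  and is strictly increasing and unbounded on \<open>[0, \<infinity>)\<close>. So \<open>\<tau>\<^sub>P\<close> is the unique positive root of
  \<open>h\<^sub>P = 1\<close>. Enlarging \<open>P\<close> enlarges \<open>h\<^sub>P\<close> pointwise on \<open>[0, \<infinity>)\<close>, which can only move that
  root to the left.\<close>

definition eP_coeff :: "nat set \<Rightarrow> nat \<Rightarrow> real" where
  "eP_coeff P n = (if n \<in> P then 1 / fact n else 0)"

definition deficit_coeff :: "nat set \<Rightarrow> nat \<Rightarrow> real" where
  "deficit_coeff P n = (if n \<in> P \<and> 2 \<le> n then (real n - 1) / fact n else 0)"

definition deficit :: "nat set \<Rightarrow> real \<Rightarrow> real" where
  "deficit P z = (\<Sum>n. deficit_coeff P n * z ^ n)"

lemma summable_eP_coeff: "summable (\<lambda>n. eP_coeff P n * z ^ n)"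
proof (rule summable_comparison_test'[OF summable_exp[of "\<bar>z\<bar>"]])
  fix n :: nat
  show "norm (eP_coeff P n * z ^ n) \<le> inverse (fact n) * \<bar>z\<bar> ^ n"
    by (auto simp: eP_coeff_def abs_mult power_abs field_simps)
qed

lemma eP_eq_powser: "eP P = (\<lambda>z. \<Sum>n. eP_coeff P n * z ^ n)"
  unfolding eP_def eP_coeff_def by (intro ext suminf_cong) auto

lemma deriv_eP: "deriv (eP P) z = (\<Sum>n. diffs (eP_coeff P) n * z ^ n)"
proof -
  have "((\<lambda>z. \<Sum>n. eP_coeff P n * z ^ n) has_field_derivative
          (\<Sum>n. diffs (eP_coeff P) n * z ^ n)) (at z)"
    by (rule termdiffs_strong'[where K = "norm z + 1"]) (auto intro: summable_eP_coeff)
  then show ?thesis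
    unfolding eP_eq_powser by (rule DERIV_imp_deriv)
qed

lemma deficit_coeff_nonneg: "deficit_coeff P n \<ge> 0"
  by (simp add: deficit_coeff_def)

lemma summable_deficit_coeff: "summable (\<lambda>n. deficit_coeff P n * z ^ n)"
proof (rule summable_comparison_test'[OF summable_exp[of "2 * \<bar>z\<bar>"]])
  fix n :: nat
  have "real n - 1 \<le> 2 ^ n"
    using of_nat_less_two_power[of n, where 'a = real] by linarith
  then have "deficit_coeff P n \<le> 2 ^ n / fact n"
    by (simp add: deficit_coeff_def divide_right_mono)
  then have "deficit_coeff P n * \<bar>z\<bar> ^ n \<le> 2 ^ n / fact n * \<bar>z\<bar> ^ n"
    by (rule mult_right_mono) simp
  then show "norm (deficit_coeff P n * z ^ n) \<le> inverse (fact n) * (2 * \<bar>z\<bar>) ^ n"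
    using deficit_coeff_nonneg[of P n]
    by (simp add: abs_mult power_abs power_mult_distrib divide_inverse mult_ac)
qed

lemma eP_minus_tangent:
  assumes "0 \<in> P"
  shows "eP P z - z * deriv (eP P) z = 1 - deficit P z"
proof -
  have e: "(\<lambda>n. eP_coeff P n * z ^ n) sums eP P z"
    unfolding eP_eq_powser using summable_eP_coeff by (rule summable_sums)
  have "(\<lambda>n. of_nat n * eP_coeff P n * z ^ (n - Suc 0)) sums deriv (eP P) z"
    using diffs_equiv[OF termdiff_converges_all[OF summable_eP_coeff]]
    by (simp add: deriv_eP)
  from sums_mult[OF this, of z]
  have e': "(\<lambda>n. of_nat n * eP_coeff P n * z ^ n) sums (z * deriv (eP P) z)"
    by (rule back_subst[where P = "\<lambda>f. f sums _"]) (auto intro!: ext simp: power_eq_if)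
  have one: "(\<lambda>n. if n = 0 then 1 else 0 :: real) sums 1"
    using sums_single[of 0 "\<lambda>_. 1::real"] by simp
  have "(\<lambda>n. (if n = 0 then 1 else 0) - (eP_coeff P n * z ^ n - of_nat n * eP_coeff P n * z ^ n))
          sums (1 - (eP P z - z * deriv (eP P) z))"
    by (intro sums_diff e e' one)
  moreover have "(\<lambda>n. (if n = 0 then 1 else 0) - (eP_coeff P n * z ^ n - of_nat n * eP_coeff P n * z ^ n))
                 = (\<lambda>n. deficit_coeff P n * z ^ n)"
  proof
    fix n :: nat
    consider "n = 0" | "n = 1" | "n \<ge> 2" by linarith
    then show "(if n = 0 then 1 else 0) - (eP_coeff P n * z ^ n - of_nat n * eP_coeff P n * z ^ n)
               = deficit_coeff P n * z ^ n"
      by cases (auto simp: eP_coeff_def deficit_coeff_def assms field_simps)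
  qed
  ultimately show ?thesis
    unfolding deficit_def by (simp add: sums_iff)
qed

lemma deficit_0 [simp]: "deficit P 0 = 0"
  unfolding deficit_def by (simp add: deficit_coeff_def)

lemma isCont_deficit: "isCont (deficit P) z"
  unfolding deficit_def[abs_def]
  by (rule isCont_powser_converges_everywhere) (rule summable_deficit_coeff)

lemma strict_mono_on_deficit:
  assumes "m \<in> P" "2 \<le> m"
  shows "strict_mono_on {0..} (deficit P)"
proof (rule strict_mono_onI)
  fix x y :: real
  assume "x \<in> {0..}" "x < y"
  then have xy: "0 \<le> x" "x < y" by auto
  have "0 < (\<Sum>n. deficit_coeff P n * y ^ n - deficit_coeff P n * x ^ n)"
  proof (rule suminf_pos2[where i = m])
    show "summable (\<lambda>n. deficit_coeff P n * y ^ n - deficit_coeff P n * x ^ n)"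
      by (intro summable_diff summable_deficit_coeff)
  next
    fix n
    show "0 \<le> deficit_coeff P n * y ^ n - deficit_coeff P n * x ^ n"
      using mult_left_mono[OF power_mono[of x y n] deficit_coeff_nonneg] xy by simp
  next
    have "deficit_coeff P m > 0"
      using assms by (auto simp: deficit_coeff_def)
    moreover have "x ^ m < y ^ m"
      using xy assms by (intro power_strict_mono) auto
    ultimately show "0 < deficit_coeff P m * y ^ m - deficit_coeff P m * x ^ m"
      by simp
  qed
  also have "\<dots> = deficit P y - deficit P x"
    unfolding deficit_def by (intro suminf_diff[symmetric] summable_deficit_coeff)
  finally show "deficit P x < deficit P y"
    by simp
qed

lemma deficit_mono_set:
  assumes "P1 \<subseteq> P2" "0 \<le> z"
  shows "deficit P1 z \<le> deficit P2 z"
  unfolding deficit_def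
  using assms by (intro suminf_le summable_deficit_coeff) (auto simp: deficit_coeff_def)

lemma deficit_eq_1_exists:
  assumes "m \<in> P" "2 \<le> m"
  obtains t where "t > 0" "deficit P t = 1"
proof -
  have a_pos: "deficit_coeff P m > 0"
    using assms by (auto simp: deficit_coeff_def)
  define Z where "Z = max 1 (1 / deficit_coeff P m)"
  have "Z \<ge> 1"
    by (simp add: Z_def)
  have "1 \<le> deficit_coeff P m * Z"
    using a_pos unfolding Z_def by (auto simp: field_simps max_def)
  also have "\<dots> \<le> deficit_coeff P m * Z ^ m"
    using \<open>Z \<ge> 1\<close> assms a_pos by (intro mult_left_mono self_le_power) auto
  also have "\<dots> \<le> deficit P Z"
    unfolding deficit_def
    using sum_le_suminf[OF summable_deficit_coeff, of "{m}" P Z] \<open>Z \<ge> 1\<close>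
    by (auto simp: deficit_coeff_def)
  finally have "1 \<le> deficit P Z" .
  then obtain t where t: "0 \<le> t" "deficit P t = 1"
    using IVT'[of "deficit P" 0 1 Z] \<open>Z \<ge> 1\<close>
    by (auto intro: continuous_at_imp_continuous_on isCont_deficit)
  moreover have "t \<noteq> 0"
    using t by auto
  ultimately show ?thesis
    by (intro that[of t]) auto
qed

lemma tauP_deficit:
  assumes "0 \<in> P" "m \<in> P" "2 \<le> m"
  shows "tauP P > 0" "deficit P (tauP P) = 1"
proof -
  have root_iff: "eP P t - t * deriv (eP P) t = 0 \<longleftrightarrow> deficit P t = 1" for t
    using eP_minus_tangent[OF assms(1)] by auto
  obtain t where t: "t > 0" "deficit P t = 1"
    using deficit_eq_1_exists[OF assms(2,3)] .
  have "\<exists>!\<tau>. \<tau> > 0 \<and> deficit P \<tau> = 1"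
  proof (rule ex1I[of _ t])
    fix s
    assume "s > 0 \<and> deficit P s = 1"
    then show "s = t"
      using t strict_mono_on_eq[OF strict_mono_on_deficit[OF assms(2,3)], of s t] by simp
  qed (use t in simp)
  then have "tauP P > 0 \<and> deficit P (tauP P) = 1"
    unfolding tauP_def root_iff by (rule theI')
  then show "tauP P > 0" "deficit P (tauP P) = 1"
    by auto
qed

theorem lemma7p4:
  fixes P1 P2 :: "nat set"
  assumes "P1 \<subseteq> P2"
    and "0 \<in> P1"
    and "minus2 P1 \<noteq> {}"
  shows "tauP P1 \<ge> tauP P2"
proof -
  obtain m where m: "m \<in> P1" "2 \<le> m"
    using assms(3) unfolding minus2_def by auto
  have m2: "m \<in> P2" "0 \<in> P2"
    using assms(1,2) m by auto
  note tau1 = tauP_deficit[OF assms(2) m]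
  note tau2 = tauP_deficit[OF m2(2,1) m(2)]
  have "deficit P2 (tauP P2) = deficit P1 (tauP P1)"
    using tau1 tau2 by simp
  also have "\<dots> \<le> deficit P2 (tauP P1)"
    using deficit_mono_set[OF assms(1), of "tauP P1"] tau1 by simp
  finally show ?thesis
    using strict_mono_on_less_eq[OF strict_mono_on_deficit[OF m2(1) m(2)], of "tauP P2" "tauP P1"]
      tau1 tau2 by simp
qed

end
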